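(* For every composition $I=(i_1,\dots,i_r)$, \[ e_{(1+i_1,i_2,\dots,i_r)}(q)=[r]_q\,e_I(q)+\sum_{k=1}^{r-1}q^{k-1}e_{(i_1,\dots,i_{k-1},i_k+i_{k+1},i_{k+2},\dots,i_r)}(q), \qquad e_{(1,i_1,i_2,\dots,i_r)}(q)=e_I(q). \] Conversely, these relations together with the initial condition $e_{(1)}(q)=1$ determine $e_I(q)$ for all compositions $I$.
   Context: For a composition $I$ of $n$, $e_I(q)$ is the coefficient of $L_I(q)$ in $S^{(1^n)}(q)$, defined as follows. Compositions: positive integers with sum $n$; $\mathrm{Des}(I)$ the set of partial sums other than $n$; $I\preceq J$ iff $\mathrm{Des}(I)\supseteq\mathrm{Des}(J)$; $\mathrm{st}(I,J)=\#\{(a,b)\in\mathrm{Des}(I)\times\mathrm{Des}(J):a\ge b\}$. $[m]_q=1+\dots+q^{m-1}$. Over $\mathbb K(q)$ ($\mathrm{char}\,\mathbb K=0$): packed words are words with letter set $\{1,\dots,m\}$; $\mathrm{pack}$ replaces the $t$-th smallest letter by $t$. For a packed word $w$ of length $n$: $\mathrm{WC}(w)$ is the composition of $n$ whose descent set is the set of positions $p<n$ with $w_p$ not occurring in $w_{p+1}\cdots w_n$; $\mathrm{sinv}(w)=\#\{i<j:w_i>w_j,\ w_j\text{ not occurring in }w_{j+1}\cdots w_n\}$. $\mathbf{WQSym}$ has basis $\mathbf M_u$ with $\mathbf M_{u'}\mathbf M_{u''}=\sum\mathbf M_u$ over packed $u=v\cdot w$ with $\mathrm{pack}(v)=u'$,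 $\mathrm{pack}(w)=u''$; $\mathbf M_{u'}\star_q\mathbf M_{u''}=\sum q^{\mathrm{sinv}(u)-\mathrm{sinv}(u')-\mathrm{sinv}(u'')}\mathbf M_u$ (associative). $\mathbf{Sym}$ is the quotient by the span of $\mathbf M_u-\mathbf M_v$ with $\mathrm{WC}(u)=\mathrm{WC}(v)$, $\zeta$ the quotient map, $\Psi_I=\zeta(\mathbf M_u)$ for $\mathrm{WC}(u)=I$. $\tilde S_m=\sum\mathbf M_u$ over nondecreasing packed $u$ of length $m$; $S^{(1^n)}(q)=\zeta(\tilde S_1\star_q\cdots\star_q\tilde S_1)$ ($n$ factors); $L_J(q)=\sum_{I\preceq J}q^{\mathrm{st}(I,J)}\Psi_I$. *)

theory Defs
  imports "HOL-Computational_Algebra.Polynomial" "HOL-Computational_Algebra.Fraction_Field"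
begin

definition composition :: "nat list \<Rightarrow> bool" where
  "composition I \<longleftrightarrow> (\<forall>x\<in>set I. 0 < x)"

definition comps :: "nat \<Rightarrow> nat list set" where
  "comps n = {I. composition I \<and> sum_list I = n}"

definition Des :: "nat list \<Rightarrow> nat set" where
  "Des I = {sum_list (take k I) | k. 0 < k \<and> k < length I}"

definition comp_le :: "nat list \<Rightarrow> nat list \<Rightarrow> bool" where
  "comp_le I J \<longleftrightarrow> Des J \<subseteq> Des I"

definition st :: "nat list \<Rightarrow> nat list \<Rightarrow> nat" where
  "st I J = card {(a, b). a \<in> Des I \<and> b \<in> Des J \<and> b \<le> a}"

definition qint :: "'a::comm_ring_1 \<Rightarrow> nat \<Rightarrow> 'a" where
  "qint q m = (\<Sum>i<m. q ^ i)"

definition packed :: "nat list \<Rightarrow> bool" where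
  "packed w \<longleftrightarrow> (\<exists>m. set w = {1..m})"

definition packed_words :: "nat \<Rightarrow> nat list set" where
  "packed_words n = {u. packed u \<and> length u = n}"

definition pack :: "nat list \<Rightarrow> nat list" where
  "pack w = map (\<lambda>x. card {y \<in> set w. y \<le> x}) w"

definition WDes :: "nat list \<Rightarrow> nat set" where
  "WDes w = {p. 1 \<le> p \<and> p < length w \<and> w ! (p - 1) \<notin> set (drop p w)}"

definition WC :: "nat list \<Rightarrow> nat list" where
  "WC w = (THE I. composition I \<and> sum_list I = length w \<and> Des I = WDes w)"

definition sinv :: "nat list \<Rightarrow> nat" where
  "sinv w = card {(i, j). i < j \<and> j < length w \<and> w ! j < w ! i \<and> w ! j \<notin> set (drop (Suc j) w)}"

text \<open>An element of WQSym is represented by its coefficient function u \<mapsto> coefficient of M_u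
  (nonzero only on packed words).\<close>

definition qprod :: "'a::field \<Rightarrow> (nat list \<Rightarrow> 'a) \<Rightarrow> (nat list \<Rightarrow> 'a) \<Rightarrow> nat list \<Rightarrow> 'a" where
  "qprod q f g u = (if packed u then
     (\<Sum>k\<le>length u. f (pack (take k u)) * g (pack (drop k u)) *
        q powi (int (sinv u) - int (sinv (pack (take k u))) - int (sinv (pack (drop k u)))))
   else 0)"

definition Stilde :: "nat \<Rightarrow> nat list \<Rightarrow> 'a::field" where
  "Stilde m u = (if packed u \<and> length u = m \<and> sorted u then 1 else 0)"

text \<open>n-fold q-product \<open>S~_1 \<star>_q \<dots> \<star>_q S~_1\<close> (n \<ge> 1 factors; left-associated, the product
  being associative). For n = 0 we take the unit M_[].\<close>
fun S1pow :: "'a::field \<Rightarrow> nat \<Rightarrow> nat list \<Rightarrow> 'a" where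
  "S1pow q 0 = (\<lambda>u. if u = [] then 1 else 0)"
| "S1pow q (Suc 0) = Stilde 1"
| "S1pow q (Suc (Suc n)) = qprod q (S1pow q (Suc n)) (Stilde 1)"

text \<open>An element of Sym (homogeneous of degree n) is represented by its coefficient function
  I \<mapsto> coefficient of Psi_I. zeta sends M_u to Psi_(WC u).\<close>
definition zeta :: "(nat list \<Rightarrow> 'a::field) \<Rightarrow> nat list \<Rightarrow> 'a" where
  "zeta f I = (\<Sum>u\<in>{u \<in> packed_words (sum_list I). WC u = I}. f u)"

definition S1n :: "'a::field \<Rightarrow> nat \<Rightarrow> nat list \<Rightarrow> 'a" where
  "S1n q n = zeta (S1pow q n)"

text \<open>Coefficient of Psi_I in L_J(q) (for I, J compositions of the same n).\<close>
definition Lq :: "'a::field \<Rightarrow> nat list \<Rightarrow> nat list \<Rightarrow> 'a" where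
  "Lq q J I = (if comp_le I J then q ^ st I J else 0)"

text \<open>e_I(q): coefficient of L_I(q) in the expansion of S^(1^n)(q) in the basis (L_J)_J, J \<models> n.\<close>
definition ecoef :: "'a::field \<Rightarrow> nat list \<Rightarrow> 'a" where
  "ecoef q I = (let n = sum_list I in
     (THE c. (\<forall>J. J \<notin> comps n \<longrightarrow> c J = 0) \<and>
             (\<forall>K\<in>comps n. S1n q n K = (\<Sum>J\<in>comps n. c J * Lq q J K))) I)"

definition qX :: "'k::field_char_0 poly fract" where
  "qX = Fract [:0, 1:] 1"

abbreviation e :: "nat list \<Rightarrow> 'k::field_char_0 poly fract" where
  "e I \<equiv> ecoef qX I"

definition mergeAt :: "nat list \<Rightarrow> nat \<Rightarrow> nat list" where
  "mergeAt I k = take (k - 1) I @ [I ! (k - 1) + I ! k] @ drop (k + 1) I"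

end

theory Submission
  imports Defs
begin

text \<open>
  Multiplying by S~_1 appends one letter and the powers of q telescope, so the coefficient
  of Psi_K in S^(1^n)(q) is the sinv-generating function of the packed words whose
  last-occurrence descent set is Des K. Removing the first letter x of such a word gives
  two recursions. If x occurs again, it is any of the l(K) letters and contributes q^(x-1);
  this multiplies the coefficient by [l(K)]_q when K becomes (1 + k_1, k_2, ...). If x is new,
  the rest of the word is renumbered around it, a descent at position 1 appears, and the
  factor is [l(K) + 1]_q when K becomes (1, K).

  On the other side, L_J(q) has no Psi_K term unless Des J is contained in Des K, so the
  expansion in the L_J(q) is unique, and prepending a part 1 or enlarging the first part
  changes the L_J(q) by explicit factors. The one identity with content is
  sum_J (sum_k q^(k-1) c(J merged at k)) L_J(K) = sum_J ([l(K)]_q - [l(J)]_q) c_J L_J(K),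
  obtained by summing over the pairs (D, d) of a descent set D and a descent d added to it.
  Hence the coefficients defined from those of degree n by the two relations expand
  S^(1^(n+1))(q); uniqueness of the expansion gives the relations for e_I(q), and induction
  on |I| shows that they determine e_I(q).
\<close>

lemma qint_conv_sum_atLeastAtMost: "qint q m = (\<Sum>x\<in>{1..m}. q ^ (x - 1))"
proof -
  have "{1..m} = Suc ` {..<m}"
    by (simp add: image_Suc_lessThan)
  then show ?thesis
    by (simp add: qint_def sum.reindex)
qed

lemma qint_Suc_diff:
  fixes q :: "'a::comm_ring_1"
  assumes "m \<le> N"
  shows "qint q (Suc N) - qint q (Suc m) = (\<Sum>j\<in>{Suc m..N}. q ^ j)"
proof -
  have "qint q (Suc N) - qint q (Suc m) = (\<Sum>j\<in>{..<Suc N} - {..<Suc m}. q ^ j)"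
    unfolding qint_def by (rule sum_diff[symmetric]) (use assms in auto)
  also have "{..<Suc N} - {..<Suc m} = {Suc m..N}"
    by auto
  finally show ?thesis .
qed

lemma card_less_atLeastAtMost: "x \<le> Suc m \<Longrightarrow> card {y \<in> {1..m}. y < x} = x - 1"
proof -
  assume "x \<le> Suc m"
  then have "{y \<in> {1..m}. y < x} = {1..<x}"
    by auto
  then show ?thesis
    by simp
qed

lemma sum_card_less:
  fixes F :: "'a::linorder set"
  assumes "finite F"
  shows "(\<Sum>d\<in>F. h (card {a \<in> F. a < d})) = (\<Sum>i<card F. h i)"
  using assms
proof (induction "card F" arbitrary: F)
  case (Suc k)
  define m where "m = Max F"
  define F' where "F' = F - {m}"
  have "F \<noteq> {}"
    using Suc.hyps(2) by auto
  then have m: "m \<in> F" "\<And>a. a \<in> F \<Longrightarrow> a \<le> m"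
    using Suc.prems by (auto simp: m_def)
  then have card_F': "card F' = k"
    using Suc.hyps(2) Suc.prems by (simp add: F'_def)
  have "{a \<in> F. a < m} = F'"
    using m by (auto simp: F'_def order.order_iff_strict)
  then have "(\<Sum>d\<in>F. h (card {a \<in> F. a < d})) = h k + (\<Sum>d\<in>F'. h (card {a \<in> F. a < d}))"
    using m Suc.prems card_F' by (simp add: F'_def sum.remove)
  also have "(\<Sum>d\<in>F'. h (card {a \<in> F. a < d})) = (\<Sum>d\<in>F'. h (card {a \<in> F'. a < d}))"
    using m(2) by (intro sum.cong refl arg_cong[where f = "\<lambda>A. h (card A)"])
      (auto simp: F'_def dest: leD)
  also have "h k + \<dots> = (\<Sum>i<Suc k. h i)"
    using Suc.hyps(1)[of F'] card_F' Suc.prems by (simp add: F'_def add.commute)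
  finally show ?case
    using Suc.hyps(2) by simp
qed simp

lemma sum_Pow_sum_member:
  assumes "finite E"
  shows "(\<Sum>D\<in>Pow E. \<Sum>d\<in>D. G D d) = (\<Sum>D\<in>Pow E. \<Sum>d\<in>E - D. G (insert d D) d)"
proof -
  have "(\<Sum>D\<in>Pow E. \<Sum>d\<in>D. G D d) = (\<Sum>(D, d)\<in>Sigma (Pow E) (\<lambda>D. D). G D d)"
    by (rule sum.Sigma) (use assms finite_subset in auto)
  also have "\<dots> = (\<Sum>(D, d)\<in>Sigma (Pow E) (\<lambda>D. E - D). G (insert d D) d)"
    by (rule sum.reindex_bij_witness[where i = "\<lambda>(D, d). (insert d D, d)"
          and j = "\<lambda>(D, d). (D - {d}, d)"]) (auto simp: insert_absorb)
  also have "\<dots> = (\<Sum>D\<in>Pow E. \<Sum>d\<in>E - D. G (insert d D) d)"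
    using assms by (intro sum.Sigma[symmetric]) auto
  finally show ?thesis .
qed

section \<open>Compositions and descent sets\<close>

lemma composition_Nil [simp]: "composition []"
  by (simp add: composition_def)

lemma composition_Cons [simp]: "composition (a # I) \<longleftrightarrow> 0 < a \<and> composition I"
  by (auto simp: composition_def)

lemma comps_iff [simp]: "I \<in> comps n \<longleftrightarrow> composition I \<and> sum_list I = n"
  by (simp add: comps_def)

lemma sum_list_pos_if_composition: "composition I \<Longrightarrow> I \<noteq> [] \<Longrightarrow> 0 < sum_list I"
  by (cases I) auto

lemma Nil_notin_comps: "1 \<le> n \<Longrightarrow> I \<in> comps n \<Longrightarrow> I \<noteq> []"
  by auto

lemma Des_conv_image: "Des I = (\<lambda>k. sum_list (take k I)) ` {0<..<length I}"
  by (auto simp: Des_def)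

lemma finite_Des [simp]: "finite (Des I)"
  by (simp add: Des_conv_image)

lemma Des_Nil [simp]: "Des [] = {}"
  by (simp add: Des_conv_image)

lemma Des_Cons: "Des (a # I) = (if I = [] then {} else insert a ((+) a ` Des I))"
proof (cases "I = []")
  case True
  then show ?thesis by (auto simp: Des_def)
next
  case False
  have "{0<..<length (a # I)} = insert 1 (Suc ` {0<..<length I})"
  proof (rule set_eqI)
    fix k :: nat
    show "k \<in> {0<..<length (a # I)} \<longleftrightarrow> k \<in> insert 1 (Suc ` {0<..<length I})"
      using False by (cases k) (auto simp: image_iff)
  qed
  then show ?thesis
    using False by (simp add: Des_conv_image image_image)
qed

lemma Des_singleton [simp]: "Des [a] = {}"
  by (simp add: Des_Cons)

lemma Des_subset: "composition I \<Longrightarrow> Des I \<subseteq> {1..<sum_list I}"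
proof (induction I)
  case (Cons a I)
  then show ?case
    using sum_list_pos_if_composition[of I] by (auto simp: Des_Cons)
qed simp

lemma zero_notin_Des: "composition I \<Longrightarrow> 0 \<notin> Des I"
  using Des_subset by fastforce

definition incr_head :: "nat list \<Rightarrow> nat list" where
  "incr_head I = Suc (hd I) # tl I"

lemma Des_incr_head: "I \<noteq> [] \<Longrightarrow> Des (incr_head I) = Suc ` Des I"
  by (cases I) (auto simp: incr_head_def Des_Cons image_image)

lemma Des_Cons_one: "I \<noteq> [] \<Longrightarrow> Des (1 # I) = insert 1 (Suc ` Des I)"
  by (simp add: Des_Cons image_image)

lemma composition_eq_if_Des_eq:
  assumes "composition I" "composition J" "sum_list I = sum_list J" "Des I = Des J"
  shows "I = J"
  using assms
proof (induction I arbitrary: J)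
  case Nil
  then show ?case by (cases J) (auto dest: sum_list_pos_if_composition)
next
  case (Cons a I)
  then obtain b J' where J: "J = b # J'"
    by (cases J) auto
  have min_Des: "a = Min (Des (a # K))" if "K \<noteq> []" "composition (a # K)" for a K
    using that Des_subset[of K] by (auto simp: Des_Cons intro!: Min_eqI[symmetric])
  show ?case
  proof (cases "I = []")
    case True
    then show ?thesis
      using Cons.prems J by (auto simp: Des_Cons split: if_splits)
  next
    case False
    then have "J' \<noteq> []"
      using Cons.prems J by (auto simp: Des_Cons split: if_splits)
    then have "a = b"
      using min_Des[of I a] min_Des[of J' b] False Cons.prems J by simp
    moreover have "a \<notin> (+) a ` Des I" "a \<notin> (+) a ` Des J'"
      using Cons.prems J zero_notin_Des by auto
    ultimately have "(+) a ` Des I = (+) a ` Des J'"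
      using Cons.prems J False \<open>J' \<noteq> []\<close> by (simp add: Des_Cons insert_ident)
    then have "Des I = Des J'"
      by (simp add: inj_image_eq_iff)
    then show ?thesis
      using Cons J \<open>a = b\<close> by auto
  qed
qed

lemma card_Des: "composition I \<Longrightarrow> card (Des I) = length I - 1"
proof (induction I)
  case (Cons a I)
  then have "a \<notin> (+) a ` Des I"
    using zero_notin_Des by auto
  then show ?case
    using Cons by (simp add: Des_Cons card_image)
qed simp

lemma length_eq_Suc_card_Des: "1 \<le> n \<Longrightarrow> K \<in> comps n \<Longrightarrow> length K = Suc (card (Des K))"
  using card_Des[of K] by (cases K) auto

lemma ex_composition_with_Des:
  "1 \<le> n \<Longrightarrow> D \<subseteq> {1..<n} \<Longrightarrow> \<exists>I. composition I \<and> sum_list I = n \<and> Des I = D"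
proof (induction n arbitrary: D rule: nat_induct_at_least)
  case base
  then show ?case
    by (intro exI[of _ "[1]"]) auto
next
  case (Suc n)
  define D' where "D' = {x. 0 < x \<and> Suc x \<in> D}"
  have "D' \<subseteq> {1..<n}"
    using Suc.prems by (auto simp: D'_def)
  then obtain I where I: "composition I" "sum_list I = n" "Des I = D'"
    using Suc.IH by blast
  then have "I \<noteq> []"
    using Suc.hyps by auto
  have D: "D - {1} = Suc ` D'"
  proof (rule set_eqI)
    fix x
    show "x \<in> D - {1} \<longleftrightarrow> x \<in> Suc ` D'"
      using Suc.prems by (cases x) (auto simp: D'_def)
  qed
  show ?case
  proof (cases "1 \<in> D")
    case True
    have "Des (1 # I) = insert 1 (D - {1})"
      using D I Des_Cons_one[OF \<open>I \<noteq> []\<close>] by simp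
    then have "Des (1 # I) = D"
      using True by (metis insert_Diff)
    then show ?thesis
      using I by (intro exI[of _ "1 # I"]) auto
  next
    case False
    have "Des (incr_head I) = D - {1}"
      using D I \<open>I \<noteq> []\<close> by (simp add: Des_incr_head)
    then have "Des (incr_head I) = D"
      using False by simp
    then show ?thesis
      using I \<open>I \<noteq> []\<close> by (intro exI[of _ "incr_head I"]) (cases I; simp add: incr_head_def)
  qed
qed

lemma bij_betw_Des_comps: "1 \<le> n \<Longrightarrow> bij_betw Des (comps n) (Pow {1..<n})"
proof -
  assume n: "1 \<le> n"
  have "inj_on Des (comps n)"
    by (rule inj_onI) (auto intro: composition_eq_if_Des_eq)
  moreover have "Des ` comps n \<subseteq> Pow {1..<n}"
    using Des_subset by force
  moreover have "Pow {1..<n} \<subseteq> Des ` comps n"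
  proof
    fix D assume "D \<in> Pow {1..<n}"
    then obtain I where "composition I" "sum_list I = n" "Des I = D"
      using ex_composition_with_Des[OF n] by blast
    then show "D \<in> Des ` comps n"
      by auto
  qed
  ultimately show ?thesis
    unfolding bij_betw_def by blast
qed

lemma finite_comps: "1 \<le> n \<Longrightarrow> finite (comps n)"
  using bij_betw_finite[OF bij_betw_Des_comps] by simp

lemma comps_one: "comps 1 = {[1]}"
proof (rule set_eqI)
  fix J :: "nat list"
  show "J \<in> comps 1 \<longleftrightarrow> J \<in> {[1]}"
    by (cases J rule: list.exhaust[case_product list.exhaust[of "tl J"]]) auto
qed

lemma partial_sums_strict_mono:
  assumes "composition I"
  shows "strict_mono_on {..length I} (\<lambda>k. sum_list (take k I))"
proof (rule strict_mono_onI)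
  fix i j assume ij: "i \<in> {..length I}" "j \<in> {..length I}" "i < j"
  have "take j I = take i I @ take (j - i) (drop i I)"
    using take_add[of i "j - i" I] ij by simp
  moreover have "0 < sum_list (take (j - i) (drop i I))"
    using assms ij by (intro sum_list_pos_if_composition)
      (auto simp: composition_def dest: in_set_takeD in_set_dropD)
  ultimately show "sum_list (take i I) < sum_list (take j I)"
    by simp
qed

lemma bij_betw_partial_sums_Des:
  "composition I \<Longrightarrow> bij_betw (\<lambda>k. sum_list (take k I)) {1..<length I} (Des I)"
  unfolding bij_betw_def
  by (auto simp: Des_conv_image
      intro: inj_on_subset[OF strict_mono_on_imp_inj_on[OF partial_sums_strict_mono]])

lemma card_Des_less_partial_sum:
  assumes I: "composition I" and k: "k < length I"
  shows "card {d \<in> Des I. d < sum_list (take k I)} = k - 1"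
proof -
  let ?ps = "\<lambda>k. sum_list (take k I)"
  have mono: "strict_mono_on {..length I} ?ps"
    by (rule partial_sums_strict_mono[OF I])
  have "{d \<in> Des I. d < ?ps k} = ?ps ` {i \<in> {1..<length I}. ?ps i < ?ps k}"
    by (auto simp: Des_conv_image)
  also have "{i \<in> {1..<length I}. ?ps i < ?ps k} = {1..<k}"
    using k strict_mono_on_less[OF mono] by auto
  finally have "{d \<in> Des I. d < ?ps k} = ?ps ` {1..<k}" .
  moreover have "inj_on ?ps {1..<k}"
    using k by (intro inj_on_subset[OF strict_mono_on_imp_inj_on[OF mono]]) auto
  ultimately show ?thesis
    by (simp add: card_image)
qed

lemma mergeAt_Cons: "1 \<le> k \<Longrightarrow> mergeAt (a # I) (Suc k) = a # mergeAt I k"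
  by (cases k) (simp_all add: mergeAt_def)

lemma composition_mergeAt:
  "composition I \<Longrightarrow> 1 \<le> k \<Longrightarrow> k < length I \<Longrightarrow> composition (mergeAt I k)"
  using nth_mem[of "k - 1" I]
  by (auto simp: mergeAt_def composition_def dest: in_set_takeD in_set_dropD)

lemma sum_list_mergeAt:
  "1 \<le> k \<Longrightarrow> k < length I \<Longrightarrow> sum_list (mergeAt I k) = sum_list I"
proof (induction I arbitrary: k)
  case (Cons a I)
  show ?case
  proof (cases "k = 1")
    case True
    then show ?thesis
      using Cons.prems by (cases I) (auto simp: mergeAt_def)
  next
    case False
    then obtain k' where "k = Suc k'" "1 \<le> k'"
      using Cons.prems by (cases k) auto
    then show ?thesis
      using Cons by (simp add: mergeAt_Cons)
  qed
qed simp

lemma Des_mergeAt: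
  "composition I \<Longrightarrow> 1 \<le> k \<Longrightarrow> k < length I \<Longrightarrow>
    Des (mergeAt I k) = Des I - {sum_list (take k I)}"
proof (induction I arbitrary: k)
  case (Cons a I)
  show ?case
  proof (cases "k = 1")
    case True
    then obtain b I' where I: "I = b # I'"
      using Cons.prems by (cases I) auto
    have "a \<notin> (+) a ` Des I"
      using Cons.prems zero_notin_Des by auto
    then have "Des (a # I) - {a} = (+) a ` Des I"
      using I by (simp add: Des_Cons)
    also have "\<dots> = Des ((a + b) # I')"
      by (simp add: I Des_Cons image_image add.assoc)
    finally show ?thesis
      using True I by (simp add: mergeAt_def)
  next
    case False
    then obtain k' where k: "k = Suc k'" "1 \<le> k'" "k' < length I"
      using Cons.prems by (cases k) auto
    have "0 < sum_list (take k' I)"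
      using Cons.prems k strict_mono_onD[OF partial_sums_strict_mono, of I 0 k'] by simp
    moreover have "mergeAt I k' \<noteq> []"
      using k by (simp add: mergeAt_def)
    ultimately show ?thesis
      using Cons k by (auto simp: mergeAt_Cons Des_Cons)
  qed
qed simp

lemma mergeAt_in_comps: "I \<in> comps n \<Longrightarrow> k \<in> {1..<length I} \<Longrightarrow> mergeAt I k \<in> comps n"
  by (simp add: composition_mergeAt sum_list_mergeAt)

lemma incr_head_in_comps: "1 \<le> n \<Longrightarrow> I \<in> comps n \<Longrightarrow> incr_head I \<in> comps (Suc n)"
  by (cases I) (auto simp: incr_head_def)

lemma comps_Suc: "1 \<le> n \<Longrightarrow> comps (Suc n) = Cons 1 ` comps n \<union> incr_head ` comps n"
proof (rule set_eqI, rule iffI)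
  fix I assume n: "1 \<le> n" and I: "I \<in> comps (Suc n)"
  then obtain a J where aJ: "I = a # J" "0 < a" "composition J" "a + sum_list J = Suc n"
    by (cases I) auto
  show "I \<in> Cons 1 ` comps n \<union> incr_head ` comps n"
  proof (cases "a = 1")
    case True
    then show ?thesis
      using aJ by auto
  next
    case False
    then have "(a - 1) # J \<in> comps n" "incr_head ((a - 1) # J) = I"
      using aJ by (auto simp: incr_head_def)
    then show ?thesis
      by blast
  qed
next
  fix I assume "1 \<le> n" "I \<in> Cons 1 ` comps n \<union> incr_head ` comps n"
  then show "I \<in> comps (Suc n)"
    using incr_head_in_comps by auto
qed

lemma sum_comps_Suc:
  assumes n: "1 \<le> n"
  shows "(\<Sum>I\<in>comps (Suc n). f I) = (\<Sum>I\<in>comps n. f (1 # I)) + (\<Sum>I\<in>comps n. f (incr_head I))"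
proof -
  have "inj_on incr_head (comps n)"
    using n by (auto simp: inj_on_def incr_head_def intro: list.expand)
  moreover have "1 # J \<noteq> incr_head I" if "I \<in> comps n" for I J
    using that n by (cases I) (auto simp: incr_head_def)
  then have "Cons 1 ` comps n \<inter> incr_head ` comps n = {}"
    by blast
  ultimately show ?thesis
    unfolding comps_Suc[OF n]
    by (simp add: sum.union_disjoint finite_comps[OF n] sum.reindex)
qed

section \<open>Packed words and their statistics\<close>

definition letter_rank :: "nat list \<Rightarrow> nat \<Rightarrow> nat" where
  "letter_rank w x = card {y \<in> set w. y \<le> x}"

lemma pack_conv_map_letter_rank: "pack w = map (letter_rank w) w"
  by (simp add: pack_def letter_rank_def)

lemma length_pack [simp]: "length (pack w) = length w"
  by (simp add: pack_def)

lemma strict_mono_on_letter_rank: "strict_mono_on (set w) (letter_rank w)"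
proof (rule strict_mono_onI)
  fix x y assume "x \<in> set w" "y \<in> set w" "x < y"
  then have "y \<in> {z \<in> set w. z \<le> y}" "y \<notin> {z \<in> set w. z \<le> x}"
    "{z \<in> set w. z \<le> x} \<subseteq> {z \<in> set w. z \<le> y}"
    by auto
  then have "{z \<in> set w. z \<le> x} \<subset> {z \<in> set w. z \<le> y}"
    by blast
  then show "letter_rank w x < letter_rank w y"
    unfolding letter_rank_def by (intro psubset_card_mono) auto
qed

lemma set_pack: "set (pack w) = {1..card (set w)}"
proof -
  have "letter_rank w ` set w \<subseteq> {1..card (set w)}"
  proof
    fix z assume "z \<in> letter_rank w ` set w"
    then obtain x where x: "x \<in> set w" "z = letter_rank w x"
      by auto
    then have "x \<in> {y \<in> set w. y \<le> x}"
      by simp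
    then have "0 < letter_rank w x"
      unfolding letter_rank_def by (subst card_gt_0_iff) auto
    moreover have "letter_rank w x \<le> card (set w)"
      unfolding letter_rank_def by (intro card_mono) auto
    ultimately show "z \<in> {1..card (set w)}"
      using x by auto
  qed
  moreover have "card (letter_rank w ` set w) = card (set w)"
    using strict_mono_on_imp_inj_on[OF strict_mono_on_letter_rank] by (simp add: card_image)
  ultimately show ?thesis
    by (simp add: pack_conv_map_letter_rank card_subset_eq)
qed

lemma packed_pack: "packed (pack w)"
  unfolding packed_def using set_pack by blast

lemma packed_Nil [simp]: "packed []"
  by (auto simp: packed_def intro: exI[of _ 0])

lemma packed_iff: "packed u \<longleftrightarrow> set u = {1..card (set u)}"
  unfolding packed_def by (metis card_atLeastAtMost diff_Suc_1)

lemma finite_packed_words: "finite (packed_words n)"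
proof (rule finite_subset)
  show "packed_words n \<subseteq> {u. set u \<subseteq> {..n} \<and> length u = n}"
  proof
    fix u assume "u \<in> packed_words n"
    then have "set u = {1..card (set u)}" "length u = n"
      by (simp_all add: packed_words_def packed_iff)
    moreover have "card (set u) \<le> length u"
      by (rule card_length)
    ultimately show "u \<in> {u. set u \<subseteq> {..n} \<and> length u = n}"
      by (metis (mono_tags, lifting) atLeastAtMost_iff atMost_iff mem_Collect_eq order_trans subsetI)
  qed
qed (simp add: finite_lists_length_eq)

lemma pack_singleton: "pack [a] = [1]"
proof -
  have "{y \<in> set [a]. y \<le> a} = {a}"
    by auto
  then show ?thesis
    by (simp add: pack_def)
qed

lemma notin_drop_map_iff:
  assumes "inj_on h (set v)" "j < length v"
  shows "h (v ! j) \<notin> set (drop p (map h v)) \<longleftrightarrow> v ! j \<notin> set (drop p v)"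
  using assms set_drop_subset[of p v] by (auto simp: drop_map inj_on_image_mem_iff)

lemma sinv_map_strict_mono:
  assumes h: "strict_mono_on (set v) h"
  shows "sinv (map h v) = sinv v"
  unfolding sinv_def
  using notin_drop_map_iff[OF strict_mono_on_imp_inj_on[OF h]] strict_mono_on_less[OF h]
  by (intro arg_cong[where f = card]) auto

lemma WDes_map_strict_mono:
  assumes h: "strict_mono_on (set v) h"
  shows "WDes (map h v) = WDes v"
  unfolding WDes_def
  using notin_drop_map_iff[OF strict_mono_on_imp_inj_on[OF h]] by auto

lemma sinv_pack: "sinv (pack w) = sinv w"
  by (simp add: pack_conv_map_letter_rank sinv_map_strict_mono[OF strict_mono_on_letter_rank])

lemma sinv_singleton: "sinv [a] = 0"
proof -
  have "{(i, j). i < j \<and> j < length [a] \<and> [a] ! j < [a] ! i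
      \<and> [a] ! j \<notin> set (drop (Suc j) [a])} = {}"
    by auto
  then show ?thesis
    by (simp only: sinv_def card.empty)
qed

definition last_occs :: "nat list \<Rightarrow> nat set" where
  "last_occs v = {j. j < length v \<and> v ! j \<notin> set (drop (Suc j) v)}"

lemma bij_betw_nth_last_occs: "bij_betw ((!) v) (last_occs v) (set v)"
proof -
  have "v ! i \<noteq> v ! j" if "i \<in> last_occs v" "j \<in> last_occs v" "i < j" for i j
  proof -
    have "v ! j \<in> set (drop (Suc i) v)"
      using that by (auto simp: last_occs_def in_set_conv_nth intro!: exI[of _ "j - Suc i"])
    then show ?thesis
      using that(1) by (auto simp: last_occs_def)
  qed
  then have "inj_on ((!) v) (last_occs v)"
    by (metis inj_onI linorder_neqE_nat)
  moreover have "y \<in> (!) v ` last_occs v" if y: "y \<in> set v" for y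
  proof -
    define j where "j = Max {j. j < length v \<and> v ! j = y}"
    have fin: "finite {j. j < length v \<and> v ! j = y}"
      by simp
    have "{j. j < length v \<and> v ! j = y} \<noteq> {}"
      using y by (auto simp: in_set_conv_nth)
    then have j: "j < length v" "v ! j = y"
      using Max_in[OF fin] by (auto simp: j_def)
    have "y \<notin> set (drop (Suc j) v)"
    proof
      assume "y \<in> set (drop (Suc j) v)"
      then obtain k where "k < length v - Suc j" "v ! (Suc j + k) = y"
        by (auto simp: in_set_conv_nth)
      then have "Suc j + k \<le> j"
        unfolding j_def by (intro Max_ge[OF fin]) auto
      then show False
        by simp
    qed
    then show ?thesis
      using j by (auto simp: last_occs_def)
  qed
  ultimately show ?thesis
    by (auto simp: bij_betw_def last_occs_def)
qed

lemma card_set_eq_Suc_card_WDes: "v \<noteq> [] \<Longrightarrow> card (set v) = Suc (card (WDes v))"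
proof -
  assume v: "v \<noteq> []"
  have "WDes v = Suc ` (last_occs v - {length v - 1})"
  proof (rule set_eqI)
    fix p
    show "p \<in> WDes v \<longleftrightarrow> p \<in> Suc ` (last_occs v - {length v - 1})"
      by (cases p) (auto simp: WDes_def last_occs_def)
  qed
  then have "card (WDes v) = card (last_occs v - {length v - 1})"
    by (simp add: card_image)
  moreover have "length v - 1 \<in> last_occs v" "finite (last_occs v)"
    using v by (auto simp: last_occs_def)
  ultimately show ?thesis
    using bij_betw_same_card[OF bij_betw_nth_last_occs, of v] v
    by (simp add: card_Suc_Diff1 card_gt_0_iff)
qed

lemma sinv_Cons: "sinv (x # v) = sinv v + card {y \<in> set v. y < x}"
proof -
  let ?inv = "\<lambda>w. {(i, j). i < j \<and> j < length w \<and> w ! j < w ! i \<and> w ! j \<notin> set (drop (Suc j) w)}"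
  define A where "A = {j \<in> last_occs v. v ! j < x}"
  have "?inv (x # v) = (\<lambda>j. (0, Suc j)) ` A \<union> map_prod Suc Suc ` ?inv v"
  proof (rule set_eqI)
    fix p :: "nat \<times> nat"
    show "p \<in> ?inv (x # v) \<longleftrightarrow> p \<in> (\<lambda>j. (0, Suc j)) ` A \<union> map_prod Suc Suc ` ?inv v"
      by (cases p; rename_tac i j; case_tac i; case_tac j)
        (auto simp: A_def last_occs_def image_iff)
  qed
  then have "sinv (x # v) = card ((\<lambda>j. (0, Suc j)) ` A \<union> map_prod Suc Suc ` ?inv v)"
    by (simp only: sinv_def)
  also have "\<dots> = card A + sinv v"
  proof (subst card_Un_disjoint)
    show "finite (map_prod Suc Suc ` ?inv v)"
      by (rule finite_imageI, rule finite_subset[of _ "{..<length v} \<times> {..<length v}"]) auto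
  qed (auto simp: A_def last_occs_def sinv_def card_image inj_on_def)
  finally have "sinv (x # v) = card A + sinv v" .
  moreover have "bij_betw ((!) v) A {y \<in> set v. y < x}"
    using bij_betw_nth_last_occs[of v] unfolding A_def bij_betw_def by (auto simp: inj_on_def)
  ultimately show ?thesis
    by (simp add: bij_betw_same_card)
qed

lemma WDes_Cons:
  "WDes (x # v) = (if x \<notin> set v \<and> v \<noteq> [] then insert 1 (Suc ` WDes v) else Suc ` WDes v)"
proof (rule set_eqI)
  fix p
  show "p \<in> WDes (x # v) \<longleftrightarrow>
      p \<in> (if x \<notin> set v \<and> v \<noteq> [] then insert 1 (Suc ` WDes v) else Suc ` WDes v)"
    by (cases p rule: nat.exhaust[case_product nat.exhaust[of "p - 1"]])
      (auto simp: WDes_def image_iff)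
qed

lemma zero_notin_WDes: "0 \<notin> WDes v"
  by (simp add: WDes_def)

lemma WDes_subset: "WDes u \<subseteq> {1..<length u}"
  by (auto simp: WDes_def)

lemma WC_eq_iff: "WC u = I \<longleftrightarrow> composition I \<and> sum_list I = length u \<and> Des I = WDes u"
proof -
  have "\<exists>I. composition I \<and> sum_list I = length u \<and> Des I = WDes u"
  proof (cases "u = []")
    case True
    then show ?thesis
      by (intro exI[of _ "[]"]) (auto simp: WDes_def)
  next
    case False
    then show ?thesis
      using ex_composition_with_Des[of "length u" "WDes u"] WDes_subset[of u]
      by (simp add: Suc_le_eq)
  qed
  then have ex1: "\<exists>!I. composition I \<and> sum_list I = length u \<and> Des I = WDes u"
    by (rule ex_ex1I) (auto intro: composition_eq_if_Des_eq)
  show ?thesis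
    unfolding WC_def using the1_equality[OF ex1] theI'[OF ex1] by blast
qed

section \<open>The coefficients of \<open>S\<^sup>(\<^sup>1\<^sup>\<^sup>n\<^sup>)(q)\<close>\<close>

lemma Stilde_one_pack: "Stilde (Suc 0) (pack w) = (if length w = 1 then 1 else 0)"
  by (cases w) (auto simp: Stilde_def pack_singleton packed_pack)

lemma qprod_Stilde_one:
  assumes "packed u" "u \<noteq> []"
  shows "qprod q f (Stilde (Suc 0)) u
    = f (pack (butlast u)) * q powi (int (sinv u) - int (sinv (butlast u)))"
proof -
  let ?L = "length u - 1"
  have last: "length u - k = Suc 0 \<longleftrightarrow> k = ?L" if "k \<le> length u" for k
    using that assms by (cases u rule: rev_cases) auto
  let ?t = "\<lambda>k. f (pack (take k u)) * q powi (int (sinv u) - int (sinv (pack (take k u)))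
      - int (sinv (pack (drop k u))))"
  have "qprod q f (Stilde (Suc 0)) u = (\<Sum>k\<le>length u. if k = ?L then ?t k else 0)"
    unfolding qprod_def using assms
    by (simp only: if_True) (rule sum.cong; simp add: Stilde_one_pack last)
  also have "\<dots> = ?t ?L"
    by simp
  also have "pack (drop ?L u) = [1]"
    using assms by (cases u rule: rev_cases) (simp_all add: pack_singleton)
  finally show ?thesis
    by (simp add: butlast_conv_take sinv_pack sinv_singleton)
qed

lemma S1pow_eq:
  fixes q :: "'a::field"
  assumes q: "q \<noteq> 0"
  shows "S1pow q n u = (if packed u \<and> length u = n then q ^ sinv u else 0)"
  using assms
proof (induction q n arbitrary: u rule: S1pow.induct)
  case (1 q)
  then show ?case
    by (simp add: sinv_def)
next
  case (2 q)
  then show ?case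
    by (cases u rule: list.exhaust[case_product list.exhaust[of "tl u"]])
      (auto simp: Stilde_def sinv_singleton)
next
  case (3 q n)
  show ?case
  proof (cases "packed u \<and> u \<noteq> []")
    case True
    have "q ^ sinv (butlast u) * q powi (int (sinv u) - int (sinv (butlast u))) = q ^ sinv u"
      by (subst power_int_diff) (use "3.prems" in auto)
    moreover have "length u - 1 = Suc n \<longleftrightarrow> length u = Suc (Suc n)"
      using True by (cases u) auto
    ultimately show ?thesis
      using True 3 by (simp add: qprod_Stilde_one packed_pack sinv_pack)
  next
    case False
    then show ?thesis
      by (auto simp: qprod_def Stilde_one_pack)
  qed
qed

definition sinv_genfun :: "'a::field \<Rightarrow> nat \<Rightarrow> nat set \<Rightarrow> 'a" where
  "sinv_genfun q n E = (\<Sum>u\<in>{u \<in> packed_words n. WDes u = E}. q ^ sinv u)"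

lemma S1n_eq_sinv_genfun:
  fixes q :: "'a::field"
  assumes "q \<noteq> 0" "I \<in> comps n"
  shows "S1n q n I = sinv_genfun q n (Des I)"
proof -
  have "S1n q n I = (\<Sum>u\<in>{u \<in> packed_words n. WC u = I}. q ^ sinv u)"
    unfolding S1n_def zeta_def using assms
    by (intro sum.cong) (auto simp: S1pow_eq packed_words_def)
  also have "{u \<in> packed_words n. WC u = I} = {u \<in> packed_words n. WDes u = Des I}"
    using assms by (auto simp: WC_eq_iff packed_words_def)
  finally show ?thesis
    by (simp add: sinv_genfun_def)
qed

lemma set_packed_word: "u \<in> packed_words n \<Longrightarrow> 1 \<le> n \<Longrightarrow> set u = {1..Suc (card (WDes u))}"
proof -
  assume "u \<in> packed_words n" "1 \<le> n"
  then have "u \<noteq> []" "packed u"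
    by (auto simp: packed_words_def)
  then show ?thesis
    using card_set_eq_Suc_card_WDes packed_iff by metis
qed

lemma sinv_genfun_reindex:
  fixes q :: "'a::field"
  assumes bij: "bij_betw F (B \<times> {1..m}) {u \<in> packed_words N. WDes u = E}"
    and sinv_F: "\<And>v x. v \<in> B \<Longrightarrow> x \<in> {1..m} \<Longrightarrow> sinv (F (v, x)) = sinv v + (x - 1)"
    and "finite B"
  shows "sinv_genfun q N E = qint q m * (\<Sum>v\<in>B. q ^ sinv v)"
proof -
  have "sinv_genfun q N E = (\<Sum>(v, x)\<in>B \<times> {1..m}. q ^ sinv (F (v, x)))"
    unfolding sinv_genfun_def sum.reindex_bij_betw[OF bij, symmetric] by (simp add: case_prod_unfold)
  also have "\<dots> = (\<Sum>v\<in>B. \<Sum>x\<in>{1..m}. q ^ sinv (F (v, x)))"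
    using \<open>finite B\<close> by (simp add: sum.cartesian_product)
  also have "\<dots> = (\<Sum>v\<in>B. \<Sum>x\<in>{1..m}. q ^ sinv v * q ^ (x - 1))"
    by (intro sum.cong refl) (simp add: sinv_F flip: power_add)
  also have "\<dots> = qint q m * (\<Sum>v\<in>B. q ^ sinv v)"
    by (simp add: qint_conv_sum_atLeastAtMost sum_distrib_left sum_distrib_right mult.commute
        sum.swap[where A = B])
  finally show ?thesis .
qed

lemma bij_betw_Cons_repeated_letter:
  assumes n: "1 \<le> n" and E: "0 \<notin> E"
  shows "bij_betw (\<lambda>(v, x). x # v) ({v \<in> packed_words n. WDes v = E} \<times> {1..Suc (card E)})
    {u \<in> packed_words (Suc n). WDes u = Suc ` E}"
proof -
  let ?B = "{v \<in> packed_words n. WDes v = E}"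
  have "x # v \<in> packed_words (Suc n) \<and> WDes (x # v) = Suc ` E"
    if "v \<in> ?B" "x \<in> {1..Suc (card E)}" for v x
    using that set_packed_word[OF _ n, of v]
    by (auto simp: packed_words_def packed_def WDes_Cons insert_absorb)
  moreover have "u \<in> (\<lambda>(v, x). x # v) ` (?B \<times> {1..Suc (card E)})"
    if u: "u \<in> packed_words (Suc n)" "WDes u = Suc ` E" for u
  proof -
    obtain x v where xv: "u = x # v" "length v = n"
      using u by (cases u) (auto simp: packed_words_def)
    then have "v \<noteq> []"
      using n by auto
    have "x \<in> set v"
    proof (rule ccontr)
      assume "x \<notin> set v"
      then have "1 \<in> WDes u"
        using \<open>v \<noteq> []\<close> by (simp add: xv WDes_Cons)
      then show False
        using u E by auto
    qed
    then have "WDes v = E"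
      using u by (simp add: xv WDes_Cons inj_image_eq_iff)
    moreover have "packed v"
      using u \<open>x \<in> set v\<close> by (simp add: xv packed_words_def packed_def insert_absorb)
    ultimately have "v \<in> ?B"
      using xv by (simp add: packed_words_def)
    then show ?thesis
      using \<open>x \<in> set v\<close> set_packed_word[OF _ n, of v] xv by force
  qed
  ultimately show ?thesis
    by (auto simp: bij_betw_def inj_on_def)
qed

lemma sinv_genfun_Suc_image:
  fixes q :: "'a::field"
  assumes n: "1 \<le> n" and E: "0 \<notin> E"
  shows "sinv_genfun q (Suc n) (Suc ` E) = qint q (Suc (card E)) * sinv_genfun q n E"
proof (rule sinv_genfun_reindex[OF bij_betw_Cons_repeated_letter[OF n E],
      unfolded sinv_genfun_def[symmetric]])
  fix v x assume "v \<in> {v \<in> packed_words n. WDes v = E}" "x \<in> {1..Suc (card E)}"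
  then show "sinv (case (v, x) of (v, x) \<Rightarrow> x # v) = sinv v + (x - 1)"
    using set_packed_word[OF _ n, of v] card_less_atLeastAtMost[of x "Suc (card E)"]
    by (simp add: sinv_Cons)
qed (simp add: finite_packed_words)

definition shift_from :: "nat \<Rightarrow> nat \<Rightarrow> nat" where
  "shift_from x y = (if x \<le> y then Suc y else y)"

definition unshift_from :: "nat \<Rightarrow> nat \<Rightarrow> nat" where
  "unshift_from x y = (if x < y then y - 1 else y)"

lemma strict_mono_on_shift_from: "strict_mono_on A (shift_from x)"
  by (rule strict_mono_onI) (auto simp: shift_from_def)

lemma strict_mono_on_unshift_from: "x \<notin> A \<Longrightarrow> strict_mono_on A (unshift_from x)"
proof (rule strict_mono_onI)
  fix r s assume "x \<notin> A" "r \<in> A" "s \<in> A" "r < s"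
  then have "r \<noteq> x" "s \<noteq> x"
    by auto
  with \<open>r < s\<close> show "unshift_from x r < unshift_from x s"
    by (auto simp: unshift_from_def)
qed

lemma shift_from_unshift_from: "y \<noteq> x \<Longrightarrow> shift_from x (unshift_from x y) = y"
  by (auto simp: shift_from_def unshift_from_def)

lemma shift_from_image: "x \<in> {1..Suc m} \<Longrightarrow> shift_from x ` {1..m} = {1..Suc m} - {x}"
proof (rule set_eqI)
  fix z assume x: "x \<in> {1..Suc m}"
  have "z \<in> shift_from x ` {1..m}" if "z \<in> {1..Suc m} - {x}"
  proof (cases "z < x")
    case True
    then show ?thesis
      using that x by (intro image_eqI[of _ _ z]) (auto simp: shift_from_def)
  next
    case False
    then show ?thesis
      using that x by (intro image_eqI[of _ _ "z - 1"]) (auto simp: shift_from_def)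
  qed
  then show "z \<in> shift_from x ` {1..m} \<longleftrightarrow> z \<in> {1..Suc m} - {x}"
    using x by (auto simp: shift_from_def)
qed

lemma unshift_from_image: "x \<in> {1..M} \<Longrightarrow> unshift_from x ` ({1..M} - {x}) = {1..M - 1}"
proof (rule set_eqI)
  fix z assume x: "x \<in> {1..M}"
  have "z \<in> unshift_from x ` ({1..M} - {x})" if "z \<in> {1..M - 1}"
  proof (cases "z < x")
    case True
    then show ?thesis
      using that x by (intro image_eqI[of _ _ z]) (auto simp: unshift_from_def)
  next
    case False
    then show ?thesis
      using that x by (intro image_eqI[of _ _ "Suc z"]) (auto simp: unshift_from_def)
  qed
  then show "z \<in> unshift_from x ` ({1..M} - {x}) \<longleftrightarrow> z \<in> {1..M - 1}"
    using x by (auto simp: unshift_from_def)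
qed

lemma insert_new_letter:
  assumes v: "set v = {1..m}" "v \<noteq> []" and x: "x \<in> {1..Suc m}"
  shows "set (x # map (shift_from x) v) = {1..Suc m}"
    and "WDes (x # map (shift_from x) v) = insert 1 (Suc ` WDes v)"
    and "sinv (x # map (shift_from x) v) = sinv v + (x - 1)"
proof -
  have set_map: "set (map (shift_from x) v) = {1..Suc m} - {x}"
    using shift_from_image[OF x] v by simp
  then show "set (x # map (shift_from x) v) = {1..Suc m}"
    using x by auto
  show "WDes (x # map (shift_from x) v) = insert 1 (Suc ` WDes v)"
    using set_map v by (simp add: WDes_Cons WDes_map_strict_mono[OF strict_mono_on_shift_from])
  have "{y \<in> set (map (shift_from x) v). y < x} = {1..<x}"
    using set_map x by auto
  then show "sinv (x # map (shift_from x) v) = sinv v + (x - 1)"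
    by (simp add: sinv_Cons sinv_map_strict_mono[OF strict_mono_on_shift_from])
qed

lemma remove_new_letter:
  assumes x: "x \<notin> set w" and set_u: "set (x # w) = {1..M}"
  shows "map (shift_from x) (map (unshift_from x) w) = w"
    and "set (map (unshift_from x) w) = {1..M - 1}"
    and "WDes (map (unshift_from x) w) = WDes w"
proof -
  show "map (shift_from x) (map (unshift_from x) w) = w"
    unfolding map_map using x by (intro map_idI) (metis comp_apply shift_from_unshift_from)
  have "x \<in> {1..M}" "set w = {1..M} - {x}"
    using x set_u by auto
  then show "set (map (unshift_from x) w) = {1..M - 1}"
    using unshift_from_image by simp
  show "WDes (map (unshift_from x) w) = WDes w"
    using x by (simp add: WDes_map_strict_mono[OF strict_mono_on_unshift_from])
qed

lemma bij_betw_insert_new_letter: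
  assumes n: "1 \<le> n" and E: "0 \<notin> E"
  shows "bij_betw (\<lambda>(v, x). x # map (shift_from x) v)
    ({v \<in> packed_words n. WDes v = E} \<times> {1..Suc (Suc (card E))})
    {u \<in> packed_words (Suc n). WDes u = insert 1 (Suc ` E)}"
proof -
  let ?B = "{v \<in> packed_words n. WDes v = E}"
  have "inj_on (\<lambda>(v, x). x # map (shift_from x) v) (?B \<times> {1..Suc (Suc (card E))})"
    using strict_mono_on_imp_inj_on[OF strict_mono_on_shift_from[of UNIV]]
    by (auto simp: inj_on_def inj_map_eq_map)
  moreover have "x # map (shift_from x) v \<in> packed_words (Suc n)
      \<and> WDes (x # map (shift_from x) v) = insert 1 (Suc ` E)"
    if v: "v \<in> ?B" and x: "x \<in> {1..Suc (Suc (card E))}" for v x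
  proof -
    have "set v = {1..Suc (card E)}" "v \<noteq> []"
      using v n set_packed_word[OF _ n, of v] by (auto simp: packed_words_def)
    from insert_new_letter[OF this x] show ?thesis
      using v by (auto simp: packed_words_def packed_def)
  qed
  moreover have "u \<in> (\<lambda>(v, x). x # map (shift_from x) v) ` (?B \<times> {1..Suc (Suc (card E))})"
    if u: "u \<in> packed_words (Suc n)" "WDes u = insert 1 (Suc ` E)" for u
  proof -
    obtain x w where xw: "u = x # w" "length w = n"
      using u by (cases u) (auto simp: packed_words_def)
    then have "w \<noteq> []"
      using n by auto
    have "x \<notin> set w"
      using u zero_notin_WDes[of w] by (auto simp: xw WDes_Cons split: if_splits)
    then have "insert 1 (Suc ` WDes w) = insert 1 (Suc ` E)"
      using u xw \<open>w \<noteq> []\<close> by (simp add: WDes_Cons)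
    moreover have "1 \<notin> Suc ` WDes w" "1 \<notin> Suc ` E"
      using E zero_notin_WDes[of w] by auto
    ultimately have "WDes w = E"
      by (metis insert_ident inj_image_eq_iff inj_Suc)
    define v where "v = map (unshift_from x) w"
    have set_u: "set (x # w) = {1..card (set u)}"
      using u packed_iff by (auto simp: xw packed_words_def)
    note v = remove_new_letter[OF \<open>x \<notin> set w\<close> set_u, folded v_def]
    have "v \<in> ?B"
      using v xw \<open>WDes w = E\<close> by (auto simp: v_def packed_words_def packed_def)
    moreover have "x \<in> {1..Suc (Suc (card E))}"
    proof -
      have "card (set u) - 1 = Suc (card E)"
        using v(2) set_packed_word[OF _ n, of v] \<open>v \<in> ?B\<close> by auto
      moreover have "x \<in> {1..card (set u)}"
        using set_u by auto
      ultimately show ?thesis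
        by auto
    qed
    ultimately show ?thesis
      using xw v(1) by force
  qed
  ultimately show ?thesis
    by (auto simp: bij_betw_def)
qed

lemma sinv_genfun_insert_one:
  fixes q :: "'a::field"
  assumes n: "1 \<le> n" and E: "0 \<notin> E"
  shows "sinv_genfun q (Suc n) (insert 1 (Suc ` E)) = qint q (Suc (Suc (card E))) * sinv_genfun q n E"
proof (rule sinv_genfun_reindex[OF bij_betw_insert_new_letter[OF n E],
      unfolded sinv_genfun_def[symmetric]])
  fix v x assume "v \<in> {v \<in> packed_words n. WDes v = E}" "x \<in> {1..Suc (Suc (card E))}"
  then show "sinv (case (v, x) of (v, x) \<Rightarrow> x # map (shift_from x) v) = sinv v + (x - 1)"
    using insert_new_letter(3)[OF set_packed_word[OF _ n], of v x] n
    by (auto simp: packed_words_def Suc_le_eq)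
qed (simp add: finite_packed_words)

lemma S1n_Suc_Cons_one:
  fixes q :: "'a::field"
  assumes "q \<noteq> 0" "1 \<le> n" "K \<in> comps n"
  shows "S1n q (Suc n) (1 # K) = qint q (Suc (length K)) * S1n q n K"
proof -
  have K: "composition K" "K \<noteq> []"
    using assms by auto
  show ?thesis
    using assms Des_Cons_one[OF K(2)] sinv_genfun_insert_one[OF assms(2) zero_notin_Des[OF K(1)], of q]
    by (simp add: S1n_eq_sinv_genfun length_eq_Suc_card_Des)
qed

lemma S1n_Suc_incr_head:
  fixes q :: "'a::field"
  assumes "q \<noteq> 0" "1 \<le> n" "K \<in> comps n"
  shows "S1n q (Suc n) (incr_head K) = qint q (length K) * S1n q n K"
proof -
  have K: "composition K" "K \<noteq> []"
    using assms by auto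
  show ?thesis
    using assms Des_incr_head[OF K(2)] sinv_genfun_Suc_image[OF assms(2) zero_notin_Des[OF K(1)], of q]
      S1n_eq_sinv_genfun[OF assms(1) incr_head_in_comps[OF assms(2,3)]]
    by (simp add: S1n_eq_sinv_genfun length_eq_Suc_card_Des)
qed

section \<open>Expansion in the basis \<open>L\<^sub>J(q)\<close>\<close>

definition st_set :: "nat set \<Rightarrow> nat set \<Rightarrow> nat" where
  "st_set E D = card {(a, b). a \<in> E \<and> b \<in> D \<and> b \<le> a}"

lemma Lq_conv_Des: "Lq q J K = (if Des J \<subseteq> Des K then q ^ st_set (Des K) (Des J) else 0)"
  by (simp add: Lq_def comp_le_def st_def st_set_def)

lemma st_set_Suc_image: "st_set (Suc ` E) (Suc ` D) = st_set E D"
proof -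
  have "{(a, b). a \<in> Suc ` E \<and> b \<in> Suc ` D \<and> b \<le> a}
      = map_prod Suc Suc ` {(a, b). a \<in> E \<and> b \<in> D \<and> b \<le> a}"
    by auto
  then show ?thesis
    unfolding st_set_def by (simp add: card_image inj_on_def)
qed

lemma st_set_insert:
  assumes "finite E" "finite D" "d \<notin> D"
  shows "st_set E (insert d D) = st_set E D + card {a \<in> E. d \<le> a}"
proof -
  have "{(a, b). a \<in> E \<and> b \<in> insert d D \<and> b \<le> a}
      = {(a, b). a \<in> E \<and> b \<in> D \<and> b \<le> a} \<union> (\<lambda>a. (a, d)) ` {a \<in> E. d \<le> a}"
    by auto
  then have "st_set E (insert d D) = card ({(a, b). a \<in> E \<and> b \<in> D \<and> b \<le> a}
      \<union> (\<lambda>a. (a, d)) ` {a \<in> E. d \<le> a})"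
    by (simp only: st_set_def)
  also have "\<dots> = st_set E D + card {a \<in> E. d \<le> a}"
  proof (subst card_Un_disjoint)
    show "finite {(a, b). a \<in> E \<and> b \<in> D \<and> b \<le> a}"
      by (rule finite_subset[of _ "E \<times> D"]) (use assms in auto)
  qed (use assms in \<open>auto simp: st_set_def card_image inj_on_def\<close>)
  finally show ?thesis .
qed

lemma st_set_insert_one_Suc_image: "0 \<notin> D \<Longrightarrow> st_set (insert 1 (Suc ` E)) (Suc ` D) = st_set E D"
proof -
  assume "0 \<notin> D"
  then have "{(a, b). a \<in> insert 1 (Suc ` E) \<and> b \<in> Suc ` D \<and> b \<le> a}
      = {(a, b). a \<in> Suc ` E \<and> b \<in> Suc ` D \<and> b \<le> a}"
    by auto
  then show ?thesis
    using st_set_Suc_image[of E D] by (simp add: st_set_def)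
qed

lemma st_set_insert_one:
  assumes "finite E" "finite D" "0 \<notin> E" "0 \<notin> D"
  shows "st_set (insert 1 (Suc ` E)) (insert 1 (Suc ` D)) = st_set E D + Suc (card E)"
proof -
  have "st_set (insert 1 (Suc ` E)) (insert 1 (Suc ` D))
      = st_set (insert 1 (Suc ` E)) (Suc ` D) + card {a \<in> insert 1 (Suc ` E). 1 \<le> a}"
    by (rule st_set_insert) (use assms in auto)
  also have "{a \<in> insert 1 (Suc ` E). 1 \<le> a} = insert 1 (Suc ` E)"
    by auto
  also have "card (insert 1 (Suc ` E)) = Suc (card E)"
    using assms by (simp add: card_image image_iff)
  finally show ?thesis
    using st_set_insert_one_Suc_image[OF assms(4)] by simp
qed

context
  fixes n :: nat and J K :: "nat list"
  assumes n: "1 \<le> n" and J: "J \<in> comps n" and K: "K \<in> comps n"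
begin

private lemma Des_facts:
  "Des (1 # J) = insert 1 (Suc ` Des J)" "Des (1 # K) = insert 1 (Suc ` Des K)"
  "Des (incr_head J) = Suc ` Des J" "Des (incr_head K) = Suc ` Des K"
  "0 \<notin> Des J" "0 \<notin> Des K"
  using Des_Cons_one[OF Nil_notin_comps[OF n J]] Des_Cons_one[OF Nil_notin_comps[OF n K]]
    Des_incr_head[OF Nil_notin_comps[OF n J]] Des_incr_head[OF Nil_notin_comps[OF n K]]
    zero_notin_Des J K by auto

lemma Lq_Cons_one_incr_head: "Lq q (1 # J) (incr_head K) = 0"
  using Des_facts by (auto simp: Lq_conv_Des)

lemma Lq_incr_head_incr_head: "Lq q (incr_head J) (incr_head K) = Lq q J K"
  using Des_facts by (simp add: Lq_conv_Des st_set_Suc_image inj_image_subset_iff)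

lemma Lq_incr_head_Cons_one: "Lq q (incr_head J) (1 # K) = Lq q J K"
proof -
  have "Suc ` Des J \<subseteq> insert 1 (Suc ` Des K) \<longleftrightarrow> Des J \<subseteq> Des K"
    using Des_facts by auto
  then show ?thesis
    using Des_facts st_set_insert_one_Suc_image[OF Des_facts(5), of "Des K"]
    by (simp add: Lq_conv_Des)
qed

lemma Lq_Cons_one_Cons_one: "Lq q (1 # J) (1 # K) = q ^ length K * Lq q J K"
proof -
  have "insert 1 (Suc ` Des J) \<subseteq> insert 1 (Suc ` Des K) \<longleftrightarrow> Des J \<subseteq> Des K"
    using Des_facts by auto
  then show ?thesis
    using Des_facts n K st_set_insert_one[of "Des K" "Des J"]
    by (simp add: Lq_conv_Des length_eq_Suc_card_Des power_add mult_ac)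
qed

end

definition L_expansion :: "'a::field \<Rightarrow> nat \<Rightarrow> (nat list \<Rightarrow> 'a) \<Rightarrow> bool" where
  "L_expansion q n c \<longleftrightarrow> (\<forall>J. J \<notin> comps n \<longrightarrow> c J = 0) \<and>
      (\<forall>K\<in>comps n. S1n q n K = (\<Sum>J\<in>comps n. c J * Lq q J K))"

lemma L_expansion_unique:
  fixes q :: "'a::field"
  assumes q: "q \<noteq> 0" and n: "1 \<le> n" and c: "L_expansion q n c" and d: "L_expansion q n d"
  shows "c = d"
proof -
  have "c K = d K" if "K \<in> comps n" for K
    using that
  proof (induction "card (Des K)" arbitrary: K rule: less_induct)
    case less
    have below: "c J * Lq q J K = d J * Lq q J K" if J: "J \<in> comps n - {K}" for J
    proof (cases "Des J \<subseteq> Des K")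
      case True
      then have "Des J \<subset> Des K"
        using J less.prems composition_eq_if_Des_eq[of J K] by auto
      then have "c J = d J"
        using less J by (simp add: psubset_card_mono)
      then show ?thesis
        by simp
    qed (simp add: Lq_conv_Des)
    have "c K * Lq q K K + (\<Sum>J\<in>comps n - {K}. c J * Lq q J K)
        = d K * Lq q K K + (\<Sum>J\<in>comps n - {K}. d J * Lq q J K)"
      using c d less.prems finite_comps[OF n] by (simp add: L_expansion_def sum.remove)
    moreover have "(\<Sum>J\<in>comps n - {K}. c J * Lq q J K) = (\<Sum>J\<in>comps n - {K}. d J * Lq q J K)"
      using below by (rule sum.cong[OF refl])
    ultimately have "c K * Lq q K K = d K * Lq q K K"
      by simp
    moreover have "Lq q K K \<noteq> 0"
      using q by (simp add: Lq_conv_Des)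
    ultimately show ?case
      by simp
  qed
  then show ?thesis
    using c d unfolding L_expansion_def by (metis ext)
qed

lemma ecoef_eq_if_L_expansion:
  fixes q :: "'a::field"
  assumes "q \<noteq> 0" "1 \<le> n" "L_expansion q n c" "J \<in> comps n"
  shows "ecoef q J = c J"
proof -
  have "(THE c. L_expansion q n c) = c"
    using assms L_expansion_unique by blast
  then show ?thesis
    using assms(4) by (simp add: ecoef_def L_expansion_def)
qed

lemma L_expansion_one:
  fixes q :: "'a::field"
  assumes q: "q \<noteq> 0"
  shows "L_expansion q 1 (\<lambda>J. if J = [1] then 1 else 0)"
proof -
  have "{u \<in> packed_words 1. WDes u = {}} = {[1]}"
  proof (rule set_eqI)
    fix u
    show "u \<in> {u \<in> packed_words 1. WDes u = {}} \<longleftrightarrow> u \<in> {[1]}"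
      by (cases u rule: list.exhaust[case_product list.exhaust[of "tl u"]])
        (auto simp: packed_words_def packed_def WDes_def, metis atLeastAtMost_singleton_iff)
  qed
  then have "S1n q 1 [1] = 1"
    using S1n_eq_sinv_genfun[OF q, of "[1]" 1] by (simp add: sinv_genfun_def sinv_singleton)
  moreover have "Lq q [1] [1] = 1"
    by (simp add: Lq_conv_Des st_set_def)
  ultimately show ?thesis
    unfolding L_expansion_def comps_one by simp
qed

definition merge_sum :: "'a::comm_ring_1 \<Rightarrow> (nat list \<Rightarrow> 'a) \<Rightarrow> nat list \<Rightarrow> 'a" where
  "merge_sum q c J = (\<Sum>k\<in>{1..<length J}. q ^ (k - 1) * c (mergeAt J k))"

definition comp_of_Des :: "nat \<Rightarrow> nat set \<Rightarrow> nat list" where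
  "comp_of_Des n D = the_inv_into (comps n) Des D"

lemma bij_betw_comp_of_Des: "1 \<le> n \<Longrightarrow> bij_betw (comp_of_Des n) (Pow {1..<n}) (comps n)"
  unfolding comp_of_Des_def by (rule bij_betw_the_inv_into[OF bij_betw_Des_comps])

lemma comp_of_Des_in_comps: "1 \<le> n \<Longrightarrow> D \<subseteq> {1..<n} \<Longrightarrow> comp_of_Des n D \<in> comps n"
  using bij_betw_apply[OF bij_betw_comp_of_Des] by blast

lemma Des_comp_of_Des: "1 \<le> n \<Longrightarrow> D \<subseteq> {1..<n} \<Longrightarrow> Des (comp_of_Des n D) = D"
  unfolding comp_of_Des_def by (rule f_the_inv_into_f_bij_betw[OF bij_betw_Des_comps]) auto

lemma comp_of_Des_Des: "1 \<le> n \<Longrightarrow> J \<in> comps n \<Longrightarrow> comp_of_Des n (Des J) = J"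
  unfolding comp_of_Des_def
  by (rule the_inv_into_f_f[OF bij_betw_imp_inj_on[OF bij_betw_Des_comps]])

lemma merge_sum_conv_Des:
  assumes n: "1 \<le> n" and J: "J \<in> comps n"
  shows "merge_sum q c J
    = (\<Sum>d\<in>Des J. q ^ card {b \<in> Des J. b < d} * c (comp_of_Des n (Des J - {d})))"
proof -
  let ?t = "\<lambda>d. q ^ card {b \<in> Des J. b < d} * c (comp_of_Des n (Des J - {d}))"
  have "merge_sum q c J = (\<Sum>k\<in>{1..<length J}. ?t (sum_list (take k J)))"
    unfolding merge_sum_def
  proof (rule sum.cong[OF refl])
    fix k assume k: "k \<in> {1..<length J}"
    then have "comp_of_Des n (Des J - {sum_list (take k J)}) = mergeAt J k"
      using comp_of_Des_Des[OF n mergeAt_in_comps[OF J k]] J by (simp add: Des_mergeAt)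
    then show "q ^ (k - 1) * c (mergeAt J k) = ?t (sum_list (take k J))"
      using k J by (simp add: card_Des_less_partial_sum)
  qed
  also have "\<dots> = (\<Sum>d\<in>Des J. ?t d)"
    using J by (intro sum.reindex_bij_betw bij_betw_partial_sums_Des) simp
  finally show ?thesis .
qed

lemma sum_Lq_conv_Pow:
  assumes n: "1 \<le> n" and K: "K \<in> comps n"
  shows "(\<Sum>J\<in>comps n. H J * Lq q J K)
    = (\<Sum>D\<in>Pow (Des K). H (comp_of_Des n D) * q ^ st_set (Des K) D)"
proof -
  have DesK: "Des K \<subseteq> {1..<n}"
    using K Des_subset by auto
  have "(\<Sum>J\<in>comps n. H J * Lq q J K)
      = (\<Sum>D\<in>Pow {1..<n}. H (comp_of_Des n D) * Lq q (comp_of_Des n D) K)"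
    by (rule sum.reindex_bij_betw[OF bij_betw_comp_of_Des[OF n], symmetric])
  also have "\<dots> = (\<Sum>D\<in>Pow {1..<n}. if D \<subseteq> Des K
      then H (comp_of_Des n D) * q ^ st_set (Des K) D else 0)"
    by (intro sum.cong refl) (simp add: Lq_conv_Des Des_comp_of_Des[OF n])
  also have "\<dots> = (\<Sum>D\<in>Pow {1..<n} \<inter> {D. D \<subseteq> Des K}.
      H (comp_of_Des n D) * q ^ st_set (Des K) D)"
    by (simp add: sum.If_cases)
  also have "Pow {1..<n} \<inter> {D. D \<subseteq> Des K} = Pow (Des K)"
    using DesK by auto
  finally show ?thesis .
qed

lemma sum_insert_weight:
  fixes q :: "'a::comm_ring_1" and E D :: "'b::linorder set"
  assumes "finite E" "D \<subseteq> E"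
  shows "(\<Sum>d\<in>E - D. q ^ (card {b \<in> D. b < d} + card {a \<in> E. d \<le> a}))
    = qint q (Suc (card E)) - qint q (Suc (card D))"
proof -
  have "finite D"
    using assms finite_subset by blast
  have weight: "card {b \<in> D. b < d} + card {a \<in> E. d \<le> a} = card E - card {a \<in> E - D. a < d}"
    if "d \<in> E - D" for d
  proof -
    have "card E = card ({a \<in> E. a < d} \<union> {a \<in> E. d \<le> a})"
      by (rule arg_cong[where f = card]) auto
    also have "\<dots> = card {a \<in> E. a < d} + card {a \<in> E. d \<le> a}"
      by (rule card_Un_disjoint) (use assms in auto)
    finally have "card E = card {a \<in> E. a < d} + card {a \<in> E. d \<le> a}" .
    moreover have "card {a \<in> E. a < d} = card ({b \<in> D. b < d} \<union> {a \<in> E - D. a < d})"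
      using assms by (intro arg_cong[where f = card]) auto
    moreover have "\<dots> = card {b \<in> D. b < d} + card {a \<in> E - D. a < d}"
      by (rule card_Un_disjoint) (use assms \<open>finite D\<close> in auto)
    ultimately show ?thesis
      by linarith
  qed
  have card_le: "card D \<le> card E"
    using assms by (simp add: card_mono)
  have "(\<Sum>d\<in>E - D. q ^ (card {b \<in> D. b < d} + card {a \<in> E. d \<le> a}))
      = (\<Sum>d\<in>E - D. q ^ (card E - card {a \<in> E - D. a < d}))"
    by (intro sum.cong refl) (simp add: weight)
  also have "\<dots> = (\<Sum>i<card (E - D). q ^ (card E - i))"
    using assms by (intro sum_card_less) simp
  also have "\<dots> = (\<Sum>j\<in>{Suc (card D)..card E}. q ^ j)"
    using assms \<open>finite D\<close> card_le
    by (intro sum.reindex_bij_witness[where i = "\<lambda>j. card E - j" and j = "\<lambda>i. card E - i"])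
      (auto simp: card_Diff_subset)
  also have "\<dots> = qint q (Suc (card E)) - qint q (Suc (card D))"
    by (rule qint_Suc_diff[OF card_le, symmetric])
  finally show ?thesis .
qed

lemma sum_Pow_st_set_remove:
  fixes q :: "'a::comm_ring_1" and E :: "nat set"
  assumes E: "finite E"
  shows "(\<Sum>D\<in>Pow E. q ^ st_set E D * (\<Sum>d\<in>D. q ^ card {b \<in> D. b < d} * g (D - {d})))
    = (\<Sum>D\<in>Pow E. (qint q (Suc (card E)) - qint q (Suc (card D))) * g D * q ^ st_set E D)"
proof -
  have inner: "(\<Sum>d\<in>E - D. q ^ st_set E (insert d D)
        * (q ^ card {b \<in> insert d D. b < d} * g (insert d D - {d})))
      = (qint q (Suc (card E)) - qint q (Suc (card D))) * g D * q ^ st_set E D"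
    if D: "D \<in> Pow E" for D
  proof -
    have "finite D"
      using D E finite_subset by auto
    have less_insert: "{b \<in> insert d D. b < d} = {b \<in> D. b < d}" for d :: nat
      by auto
    have "(\<Sum>d\<in>E - D. q ^ st_set E (insert d D)
          * (q ^ card {b \<in> insert d D. b < d} * g (insert d D - {d})))
        = (\<Sum>d\<in>E - D. g D * q ^ st_set E D
          * q ^ (card {b \<in> D. b < d} + card {a \<in> E. d \<le> a}))"
      using E \<open>finite D\<close>
      by (intro sum.cong refl) (simp only: less_insert, auto simp: st_set_insert power_add mult_ac)
    also have "\<dots> = (qint q (Suc (card E)) - qint q (Suc (card D))) * g D * q ^ st_set E D"
      using E D by (simp add: sum_insert_weight mult_ac flip: sum_distrib_left)
    finally show ?thesis .
  qed
  have "(\<Sum>D\<in>Pow E. q ^ st_set E D * (\<Sum>d\<in>D. q ^ card {b \<in> D. b < d} * g (D - {d})))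
      = (\<Sum>D\<in>Pow E. \<Sum>d\<in>D. q ^ st_set E D * (q ^ card {b \<in> D. b < d} * g (D - {d})))"
    by (simp add: sum_distrib_left)
  also have "\<dots> = (\<Sum>D\<in>Pow E. \<Sum>d\<in>E - D. q ^ st_set E (insert d D)
      * (q ^ card {b \<in> insert d D. b < d} * g (insert d D - {d})))"
    by (rule sum_Pow_sum_member[OF E])
  also have "\<dots> = (\<Sum>D\<in>Pow E. (qint q (Suc (card E)) - qint q (Suc (card D))) * g D * q ^ st_set E D)"
    by (rule sum.cong[OF refl inner])
  finally show ?thesis .
qed

lemma sum_merge_sum_Lq:
  fixes q :: "'a::field"
  assumes n: "1 \<le> n" and K: "K \<in> comps n"
  shows "(\<Sum>J\<in>comps n. merge_sum q c J * Lq q J K)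
    = (\<Sum>J\<in>comps n. (qint q (length K) - qint q (length J)) * c J * Lq q J K)"
proof -
  let ?E = "Des K"
  have sub: "D \<subseteq> {1..<n}" if "D \<in> Pow ?E" for D
    using that K Des_subset by auto
  have length_comp_of_Des: "length (comp_of_Des n D) = Suc (card D)" if "D \<in> Pow ?E" for D
    using card_Des[of "comp_of_Des n D"] comp_of_Des_in_comps[OF n sub[OF that]]
      Des_comp_of_Des[OF n sub[OF that]] Nil_notin_comps[OF n] by fastforce
  have "length K = Suc (card ?E)"
    using K n card_Des[of K] by (cases K) auto
  have "(\<Sum>J\<in>comps n. merge_sum q c J * Lq q J K)
      = (\<Sum>D\<in>Pow ?E. merge_sum q c (comp_of_Des n D) * q ^ st_set ?E D)"
    by (rule sum_Lq_conv_Pow[OF n K])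
  also have "\<dots> = (\<Sum>D\<in>Pow ?E. q ^ st_set ?E D
      * (\<Sum>d\<in>D. q ^ card {b \<in> D. b < d} * c (comp_of_Des n (D - {d}))))"
    by (intro sum.cong refl) (simp add: merge_sum_conv_Des[OF n comp_of_Des_in_comps[OF n sub]]
        Des_comp_of_Des[OF n sub] mult.commute)
  also have "\<dots> = (\<Sum>D\<in>Pow ?E. (qint q (Suc (card ?E)) - qint q (Suc (card D)))
      * c (comp_of_Des n D) * q ^ st_set ?E D)"
    by (rule sum_Pow_st_set_remove) simp
  also have "\<dots> = (\<Sum>J\<in>comps n. (qint q (length K) - qint q (length J)) * c J * Lq q J K)"
    unfolding sum_Lq_conv_Pow[OF n K] \<open>length K = Suc (card ?E)\<close>
    by (intro sum.cong refl) (simp add: length_comp_of_Des)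
  finally show ?thesis .
qed

section \<open>The recursion for \<open>e\<^sub>I(q)\<close>\<close>

text \<open>The degree n + 1 coefficients that the two relations force, given the degree n
  coefficients c: a composition of n + 1 is either 1 # J or incr_head J with J a composition of n.\<close>

definition next_expansion :: "'a::field \<Rightarrow> nat \<Rightarrow> (nat list \<Rightarrow> 'a) \<Rightarrow> nat list \<Rightarrow> 'a" where
  "next_expansion q n c J = (if J \<in> comps (Suc n) then
      if hd J = 1 then c (tl J)
      else qint q (length J) * c ((hd J - 1) # tl J) + merge_sum q c ((hd J - 1) # tl J)
    else 0)"

lemma next_expansion_Cons_one: "J \<in> comps n \<Longrightarrow> next_expansion q n c (1 # J) = c J"
  by (simp add: next_expansion_def)

lemma next_expansion_incr_head:
  "1 \<le> n \<Longrightarrow> J \<in> comps n \<Longrightarrow>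
    next_expansion q n c (incr_head J) = qint q (length J) * c J + merge_sum q c J"
  by (cases J) (auto simp: next_expansion_def incr_head_def)

lemma sum_next_expansion_incr_head_Lq:
  fixes q :: "'a::field"
  assumes n: "1 \<le> n" and c: "L_expansion q n c" and K: "K \<in> comps n"
  shows "(\<Sum>J\<in>comps n. next_expansion q n c (incr_head J) * Lq q J K) = qint q (length K) * S1n q n K"
proof -
  have "(\<Sum>J\<in>comps n. next_expansion q n c (incr_head J) * Lq q J K)
      = (\<Sum>J\<in>comps n. qint q (length J) * c J * Lq q J K) + (\<Sum>J\<in>comps n. merge_sum q c J * Lq q J K)"
    using n by (simp add: next_expansion_incr_head algebra_simps sum.distrib)
  also have "(\<Sum>J\<in>comps n. merge_sum q c J * Lq q J K)
      = (\<Sum>J\<in>comps n. (qint q (length K) - qint q (length J)) * c J * Lq q J K)"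
    by (rule sum_merge_sum_Lq[OF n K])
  also have "(\<Sum>J\<in>comps n. qint q (length J) * c J * Lq q J K) + \<dots>
      = (\<Sum>J\<in>comps n. qint q (length K) * (c J * Lq q J K))"
    by (simp add: algebra_simps flip: sum.distrib)
  also have "\<dots> = qint q (length K) * S1n q n K"
    using c K by (simp add: L_expansion_def sum_distrib_left)
  finally show ?thesis .
qed

lemma sum_next_expansion_Lq_Cons_one:
  fixes q :: "'a::field"
  assumes n: "1 \<le> n" and c: "L_expansion q n c" and K: "K \<in> comps n"
  shows "(\<Sum>J\<in>comps (Suc n). next_expansion q n c J * Lq q J (1 # K))
    = qint q (Suc (length K)) * S1n q n K"
proof -
  have "(\<Sum>J\<in>comps (Suc n). next_expansion q n c J * Lq q J (1 # K))
      = (\<Sum>J\<in>comps n. next_expansion q n c (1 # J) * Lq q (1 # J) (1 # K))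
        + (\<Sum>J\<in>comps n. next_expansion q n c (incr_head J) * Lq q (incr_head J) (1 # K))"
    by (rule sum_comps_Suc[OF n])
  also have "\<dots> = (\<Sum>J\<in>comps n. q ^ length K * (c J * Lq q J K))
        + (\<Sum>J\<in>comps n. next_expansion q n c (incr_head J) * Lq q J K)"
  proof (intro arg_cong2[where f = "(+)"] sum.cong refl)
    fix J assume J: "J \<in> comps n"
    show "next_expansion q n c (1 # J) * Lq q (1 # J) (1 # K) = q ^ length K * (c J * Lq q J K)"
      by (simp only: next_expansion_Cons_one[OF J] Lq_Cons_one_Cons_one[OF n J K] mult_ac)
    show "next_expansion q n c (incr_head J) * Lq q (incr_head J) (1 # K)
        = next_expansion q n c (incr_head J) * Lq q J K"
      by (simp only: Lq_incr_head_Cons_one[OF n J K])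
  qed
  also have "\<dots> = q ^ length K * S1n q n K + qint q (length K) * S1n q n K"
    using c K
    by (simp only: sum_next_expansion_incr_head_Lq[OF n c K] flip: sum_distrib_left)
      (simp add: L_expansion_def)
  also have "\<dots> = qint q (Suc (length K)) * S1n q n K"
    by (simp add: qint_def algebra_simps)
  finally show ?thesis .
qed

lemma sum_next_expansion_Lq_incr_head:
  fixes q :: "'a::field"
  assumes n: "1 \<le> n" and c: "L_expansion q n c" and K: "K \<in> comps n"
  shows "(\<Sum>J\<in>comps (Suc n). next_expansion q n c J * Lq q J (incr_head K))
    = qint q (length K) * S1n q n K"
proof -
  have "(\<Sum>J\<in>comps (Suc n). next_expansion q n c J * Lq q J (incr_head K))
      = (\<Sum>J\<in>comps n. next_expansion q n c (1 # J) * Lq q (1 # J) (incr_head K))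
        + (\<Sum>J\<in>comps n. next_expansion q n c (incr_head J) * Lq q (incr_head J) (incr_head K))"
    by (rule sum_comps_Suc[OF n])
  also have "\<dots> = 0 + (\<Sum>J\<in>comps n. next_expansion q n c (incr_head J) * Lq q J K)"
  proof (intro arg_cong2[where f = "(+)"] sum.cong sum.neutral ballI refl)
    fix J assume J: "J \<in> comps n"
    show "next_expansion q n c (1 # J) * Lq q (1 # J) (incr_head K) = 0"
      by (simp only: Lq_Cons_one_incr_head[OF n J K] mult_zero_right)
    show "next_expansion q n c (incr_head J) * Lq q (incr_head J) (incr_head K)
        = next_expansion q n c (incr_head J) * Lq q J K"
      by (simp only: Lq_incr_head_incr_head[OF n J K])
  qed
  finally show ?thesis
    using sum_next_expansion_incr_head_Lq[OF n c K] by simp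
qed

lemma L_expansion_next:
  fixes q :: "'a::field"
  assumes q: "q \<noteq> 0" and n: "1 \<le> n" and c: "L_expansion q n c"
  shows "L_expansion q (Suc n) (next_expansion q n c)"
  unfolding L_expansion_def
proof (intro conjI allI impI ballI)
  fix J assume "J \<notin> comps (Suc n)"
  then show "next_expansion q n c J = 0"
    by (simp add: next_expansion_def del: comps_iff)
next
  fix K' assume "K' \<in> comps (Suc n)"
  then consider K where "K \<in> comps n" "K' = 1 # K" | K where "K \<in> comps n" "K' = incr_head K"
    using comps_Suc[OF n] by blast
  then show "S1n q (Suc n) K' = (\<Sum>J\<in>comps (Suc n). next_expansion q n c J * Lq q J K')"
  proof cases
    case 1
    then show ?thesis
      using S1n_Suc_Cons_one[OF q n] sum_next_expansion_Lq_Cons_one[OF n c] by simp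
  next
    case 2
    then show ?thesis
      using S1n_Suc_incr_head[OF q n] sum_next_expansion_Lq_incr_head[OF n c] by simp
  qed
qed

lemma ex_L_expansion:
  fixes q :: "'a::field"
  assumes "q \<noteq> 0"
  shows "1 \<le> n \<Longrightarrow> \<exists>c. L_expansion q n c"
proof (induction n rule: nat_induct_at_least)
  case base
  then show ?case
    using L_expansion_one[OF assms] by blast
next
  case (Suc n)
  then show ?case
    using L_expansion_next[OF assms Suc.hyps] by blast
qed

lemma L_expansion_ecoef:
  fixes q :: "'a::field"
  assumes q: "q \<noteq> 0" and n: "1 \<le> n"
  shows "L_expansion q n (\<lambda>J. if J \<in> comps n then ecoef q J else 0)"
proof -
  obtain c where c: "L_expansion q n c"
    using ex_L_expansion[OF q n] by blast
  then have "(\<lambda>J. if J \<in> comps n then ecoef q J else 0) = c"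
    using ecoef_eq_if_L_expansion[OF q n c] by (auto simp: L_expansion_def)
  then show ?thesis
    using c by simp
qed

lemma ecoef_singleton: "(q :: 'a::field) \<noteq> 0 \<Longrightarrow> ecoef q [1] = 1"
  using ecoef_eq_if_L_expansion[OF _ _ L_expansion_one, of q "[1]"] comps_one by simp

lemma ecoef_incr_head_Cons_one:
  fixes q :: "'a::field"
  assumes q: "q \<noteq> 0" and I: "composition I" "I \<noteq> []"
  shows "ecoef q (incr_head I) = qint q (length I) * ecoef q I + merge_sum q (ecoef q) I"
    and "ecoef q (1 # I) = ecoef q I"
proof -
  define n where "n = sum_list I"
  have n: "1 \<le> n" and In: "I \<in> comps n"
    using sum_list_pos_if_composition[OF I] I by (simp_all add: n_def)
  define c where "c = (\<lambda>J. if J \<in> comps n then ecoef q J else 0)"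
  have next_exp: "L_expansion q (Suc n) (next_expansion q n c)"
    using L_expansion_next[OF q n L_expansion_ecoef[OF q n]] by (simp add: c_def)
  have "merge_sum q c I = merge_sum q (ecoef q) I"
    using mergeAt_in_comps[OF In] by (simp add: merge_sum_def c_def)
  then show "ecoef q (incr_head I) = qint q (length I) * ecoef q I + merge_sum q (ecoef q) I"
    using ecoef_eq_if_L_expansion[OF q _ next_exp incr_head_in_comps[OF n In]] In
    by (simp add: next_expansion_incr_head[OF n In] c_def)
  show "ecoef q (1 # I) = ecoef q I"
    using ecoef_eq_if_L_expansion[OF q _ next_exp] In next_expansion_Cons_one[OF In, of q c]
    by (simp add: c_def)
qed

definition e_recursion :: "'a::comm_ring_1 \<Rightarrow> (nat list \<Rightarrow> 'a) \<Rightarrow> bool" where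
  "e_recursion q f \<longleftrightarrow> (\<forall>I. composition I \<and> I \<noteq> [] \<longrightarrow>
      f (incr_head I) = qint q (length I) * f I + merge_sum q f I \<and> f (1 # I) = f I)"

lemma e_recursion_ecoef: "(q :: 'a::field) \<noteq> 0 \<Longrightarrow> e_recursion q (ecoef q)"
  unfolding e_recursion_def using ecoef_incr_head_Cons_one by blast

lemma e_recursion_unique:
  assumes f: "e_recursion q f" and g: "e_recursion q g" and base: "f [1] = g [1]"
  shows "composition I \<Longrightarrow> I \<noteq> [] \<Longrightarrow> f I = g I"
proof (induction "sum_list I" arbitrary: I rule: less_induct)
  case less
  then obtain a T where I: "I = a # T" "0 < a" "composition T"
    by (cases I) auto
  show ?case
  proof (cases "a = 1")
    case True
    show ?thesis
    proof (cases "T = []")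
      case False
      then have "f T = g T"
        using less.hyps I True sum_list_pos_if_composition[OF I(3)] by simp
      then show ?thesis
        using f g I True False by (simp add: e_recursion_def)
    qed (use I True base in simp)
  next
    case False
    define J where "J = (a - 1) # T"
    have J: "composition J" "J \<noteq> []" "incr_head J = I" "sum_list J < sum_list I"
      using I False by (auto simp: J_def incr_head_def)
    have "f J = g J"
      using less.hyps J by blast
    moreover have "merge_sum q f J = merge_sum q g J"
      unfolding merge_sum_def using less.hyps J composition_mergeAt sum_list_mergeAt
      by (intro sum.cong refl arg_cong[where f = "(*) _"]) (auto simp: mergeAt_def)
    ultimately show ?thesis
      using f g J by (auto simp: e_recursion_def)
  qed
qed

theorem mainTheorem12:
  shows "(\<forall>I. composition I \<and> I \<noteq> [] \<longrightarrow>
            (e ((1 + hd I) # tl I) :: 'k::field_char_0 poly fract)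
              = qint qX (length I) * e I
                + (\<Sum>k\<in>{1..<length I}. qX ^ (k - 1) * e (mergeAt I k)))
       \<and> (\<forall>I. composition I \<and> I \<noteq> [] \<longrightarrow> (e (1 # I) :: 'k poly fract) = e I)
       \<and> (\<forall>f :: nat list \<Rightarrow> 'k poly fract.
            f [1] = 1
            \<and> (\<forall>I. composition I \<and> I \<noteq> [] \<longrightarrow>
                 f ((1 + hd I) # tl I) = qint qX (length I) * f I
                   + (\<Sum>k\<in>{1..<length I}. qX ^ (k - 1) * f (mergeAt I k)))
            \<and> (\<forall>I. composition I \<and> I \<noteq> [] \<longrightarrow> f (1 # I) = f I)
            \<longrightarrow> (\<forall>I. composition I \<and> I \<noteq> [] \<longrightarrow> f I = e I))"
proof -
  have q: "(qX :: 'k poly fract) \<noteq> 0"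
    by (simp add: qX_def Zero_fract_def eq_fract)
  have e_recursion_iff: "e_recursion qX f \<longleftrightarrow>
      (\<forall>I. composition I \<and> I \<noteq> [] \<longrightarrow> f ((1 + hd I) # tl I) = qint qX (length I) * f I
         + (\<Sum>k\<in>{1..<length I}. qX ^ (k - 1) * f (mergeAt I k)))
      \<and> (\<forall>I. composition I \<and> I \<noteq> [] \<longrightarrow> f (1 # I) = f I)" for f :: "nat list \<Rightarrow> 'k poly fract"
    unfolding e_recursion_def merge_sum_def incr_head_def by auto
  have "e_recursion qX (e :: nat list \<Rightarrow> 'k poly fract)"
    by (rule e_recursion_ecoef[OF q])
  moreover have "f I = e I"
    if "f [1] = 1" "e_recursion qX f" "composition I" "I \<noteq> []"
    for f :: "nat list \<Rightarrow> 'k poly fract" and I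
    using e_recursion_unique[OF that(2) \<open>e_recursion qX e\<close>] ecoef_singleton[OF q] that by simp
  ultimately show ?thesis
    unfolding e_recursion_iff by blast
qed

end
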